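(* Let $(a_n)_{n\ge 0}$ be complex numbers with $\#\{n\colon a_n\neq 0\}=+\infty$ and $\varlimsup_{n\to+\infty}\sqrt[n]{|a_n|}=0$. For $r>0$ let $\mathcal{N}(r)=\{n\in\mathbb{Z}_+\colon \ln(|a_n|r^n)>0\}$, $N(r)=\#\mathcal{N}(r)$ and $s(r)=2\sum_{n\in\mathcal{N}(r)}\ln(|a_n|r^n)$. Let $\varepsilon>0$. Then there exists a set $E\subset(1;+\infty)$ of finite logarithmic measure such that for all $r\in(1;+\infty)\setminus E$, $$N(r)<s^{1/2}(r)\exp\{(1+\varepsilon)\sqrt{\ln s(r)}\}.$$
   Context: A set $E\subset(1,+\infty)$ has finite logarithmic measure if $\int_E\frac{dr}{r}<+\infty$. *)

theory Defs
  imports "HOL-Analysis.Analysis" "HOL-Library.Liminf_Limsup"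
begin

definition finite_log_measure :: "real set \<Rightarrow> bool" where
  "finite_log_measure E \<longleftrightarrow> E \<in> sets lebesgue \<and>
     (\<integral>\<^sup>+ r\<in>E. ennreal (1 / r) \<partial>lebesgue) < \<infinity>"

definition Nset :: "(nat \<Rightarrow> complex) \<Rightarrow> real \<Rightarrow> nat set" where
  "Nset a r = {n. ln (cmod (a n) * r ^ n) > 0}"

definition Ncount :: "(nat \<Rightarrow> complex) \<Rightarrow> real \<Rightarrow> nat" where
  "Ncount a r = card (Nset a r)"

definition sfun :: "(nat \<Rightarrow> complex) \<Rightarrow> real \<Rightarrow> real" where
  "sfun a r = 2 * (\<Sum>n\<in>Nset a r. ln (cmod (a n) * r ^ n))"

end

theory Submission
  imports Defs
begin

text \<open>Replacing r by r e^h adds n h to every term ln (|a_n| r^n) of s(r), and N(r) distinct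
  indices sum to at least N(N-1)/2, so s(r e^h) \<ge> s(r) + h N(N-1). Take k = \<lfloor>ln s(r)\<rfloor>
  and h_k = exp (-(2+\<epsilon>) \<surd>k). Because s is nondecreasing and unbounded, the radii r for which
  s(r e^h_k) reaches the next level e^(k+2) form intervals of logarithmic length h_k, and
  \<Sum> h_k < \<infinity>. Off these intervals and a bounded initial one, N(N-1) < e^(k+2) / h_k \<le> e^2 s exp ((2+\<epsilon>) \<surd>(ln s)), and
  once \<epsilon> \<surd>(ln s) \<ge> 3 the surplus factor exp (\<epsilon> \<surd>(ln s)) in the square of the claimed
  bound absorbs the constant 2 e^2.\<close>

definition log_measure :: "real measure" where
  "log_measure = density lebesgue (\<lambda>r. ennreal (1 / r))"

lemma sets_log_measure [simp]: "sets log_measure = sets lebesgue"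
  by (simp add: log_measure_def)

lemma finite_log_measure_iff:
  "finite_log_measure E \<longleftrightarrow> E \<in> sets lebesgue \<and> emeasure log_measure E < \<infinity>"
proof -
  have "(\<lambda>r. ennreal (1 / r)) \<in> borel_measurable lebesgue"
    by (intro measurable_completion) measurable
  then show ?thesis
    by (auto simp: finite_log_measure_def log_measure_def emeasure_density)
qed

lemma emeasure_log_measure_Icc:
  assumes "0 < lo" "lo \<le> hi"
  shows "emeasure log_measure {lo..hi} = ennreal (ln hi - ln lo)"
proof -
  have "emeasure log_measure {lo..hi} = (\<integral>\<^sup>+ r. ennreal (1 / r) * indicator {lo..hi} r \<partial>lborel)"
    unfolding log_measure_def
    by (subst emeasure_density) (auto intro: measurable_completion simp: nn_integral_completion)
  also have "\<dots> = ennreal (ln hi - ln lo)"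
  proof (rule nn_integral_FTC_Icc)
    fix x assume "x \<in> {lo..hi}"
    then have "x > 0" using assms by auto
    then show "(ln has_real_derivative 1 / x) (at x)" "0 \<le> 1 / x"
      by (auto intro!: derivative_eq_intros)
  qed (use assms in auto)
  finally show ?thesis .
qed

lemma finite_log_measure_bounded:
  assumes "E \<in> sets lebesgue" "E \<subseteq> {lo..hi}" "0 < lo"
  shows "finite_log_measure E"
proof -
  have "emeasure log_measure E \<le> emeasure log_measure {lo..max lo hi}"
    using assms by (intro emeasure_mono) auto
  also have "\<dots> < \<infinity>"
    using assms by (simp add: emeasure_log_measure_Icc)
  finally show ?thesis
    using assms by (simp add: finite_log_measure_iff)
qed

lemma finite_log_measure_Un:
  "finite_log_measure A \<Longrightarrow> finite_log_measure B \<Longrightarrow> finite_log_measure (A \<union> B)"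
  unfolding finite_log_measure_iff
  using emeasure_subadditive[of A log_measure B]
  by (auto intro: order.strict_trans1)

lemma finite_log_measure_UN:
  assumes "\<And>k. E k \<in> sets lebesgue" "\<And>k. emeasure log_measure (E k) \<le> ennreal (h k)"
    and "summable h" "\<And>k. 0 \<le> h k"
  shows "finite_log_measure (\<Union>k. E k)"
proof -
  have "emeasure log_measure (\<Union>k. E k) \<le> (\<Sum>k. emeasure log_measure (E k))"
    using assms(1) by (intro emeasure_subadditive_countably) auto
  also have "\<dots> \<le> (\<Sum>k. ennreal (h k))"
    using assms(2) by (intro suminf_le) auto
  also have "\<dots> = ennreal (\<Sum>k. h k)"
    using assms(3,4) by (intro suminf_ennreal2) auto
  finally show ?thesis
    using assms(1) by (auto simp: finite_log_measure_iff intro: order.strict_trans1)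
qed

lemma emeasure_log_measure_multiplicative_interval:
  assumes "0 < \<rho>" "0 \<le> h"
  shows "emeasure log_measure {\<rho> * exp (- h)..\<rho>} = ennreal h"
  using assms by (simp add: emeasure_log_measure_Icc ln_mult)

text \<open>A radius r with s r < T k \<le> s (r e^h_k) lies in [\<rho>_k e^-h_k, \<rho>_k], where \<rho>_k is the
  supremum of the level set {s < T k}.\<close>
lemma level_crossing_exceptional_set:
  fixes s :: "real \<Rightarrow> real" and T h :: "nat \<Rightarrow> real"
  assumes mono: "\<And>x y. 1 < x \<Longrightarrow> x \<le> y \<Longrightarrow> s x \<le> s y"
    and lim: "filterlim s at_top at_top"
    and h: "summable h" "\<And>k. 0 \<le> h k"
  shows "\<exists>E. E \<subseteq> {1<..} \<and> finite_log_measure E \<and>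
    (\<forall>r \<in> {1<..} - E. \<forall>k. s r < T k \<longrightarrow> s (r * exp (h k)) < T k)"
proof -
  define A where "A k = {x. 1 < x \<and> s x < T k}" for k
  have bdd: "bdd_above (A k)" for k
  proof -
    obtain R where "\<forall>x\<ge>R. T k \<le> s x"
      using lim by (auto simp: filterlim_at_top eventually_at_top_linorder)
    then have "x \<le> R" if "x \<in> A k" for x
      using that by (cases "R \<le> x") (auto simp: A_def)
    then show ?thesis by (rule bdd_aboveI)
  qed
  define I where "I k = {1<..} \<inter> {Sup (A k) * exp (- h k)..Sup (A k)}" for k
  have "emeasure log_measure (I k) \<le> ennreal (h k)" for k
  proof (cases "I k = {}")
    case False
    then have "Sup (A k) > 0" by (auto simp: I_def)
    then have "emeasure log_measure (I k) \<le> emeasure log_measure {Sup (A k) * exp (- h k)..Sup (A k)}"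
      by (intro emeasure_mono) (auto simp: I_def)
    with \<open>Sup (A k) > 0\<close> h(2) show ?thesis
      by (simp add: emeasure_log_measure_multiplicative_interval)
  qed simp
  then have "finite_log_measure (\<Union>k. I k)"
    using h by (intro finite_log_measure_UN) (auto simp: I_def)
  moreover have "s (r * exp (h k)) < T k"
    if r: "r \<in> {1<..} - (\<Union>k. I k)" and less: "s r < T k" for r k
  proof (rule ccontr)
    assume not_less: "\<not> s (r * exp (h k)) < T k"
    have "r \<in> A k" using r less by (simp add: A_def)
    then have "r \<le> Sup (A k)" using bdd by (rule cSup_upper)
    moreover have "Sup (A k) \<le> r * exp (h k)"
    proof (rule cSup_least)
      fix x assume x: "x \<in> A k"
      show "x \<le> r * exp (h k)"
      proof (rule ccontr)
        assume "\<not> x \<le> r * exp (h k)"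
        then have "s (r * exp (h k)) \<le> s x"
          using r h(2)[of k] by (intro mono) (auto intro: less_le_trans one_le_exp_iff)
        with x not_less show False by (simp add: A_def)
      qed
    qed (use \<open>r \<in> A k\<close> in auto)
    ultimately have "r \<in> I k" using r by (auto simp: I_def field_simps exp_minus)
    with r show False by auto
  qed
  ultimately show ?thesis by (intro exI[of _ "\<Union>k. I k"]) (auto simp: I_def)
qed

lemma mem_Nset_iff:
  assumes "0 \<le> r"
  shows "n \<in> Nset a r \<longleftrightarrow> 1 < cmod (a n) * r ^ n"
proof -
  have "0 < ln x \<longleftrightarrow> 1 < x" if "0 \<le> x" for x :: real
    using that by (cases "x = 0") auto
  then show ?thesis using assms by (simp add: Nset_def)
qed

lemma finite_Nset:
  assumes "limsup (\<lambda>n. ereal (root n (cmod (a n)))) = 0" "0 < r"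
  shows "finite (Nset a r)"
proof -
  have "eventually (\<lambda>n. ereal (root n (cmod (a n))) < ereal (1 / r)) sequentially"
    using assms by (intro Limsup_lessD) simp
  then obtain N where N: "\<And>n. n \<ge> N \<Longrightarrow> root n (cmod (a n)) < 1 / r"
    by (auto simp: eventually_sequentially)
  have "n < Suc N" if "n \<in> Nset a r" for n
  proof (rule ccontr)
    assume "\<not> n < Suc N"
    then have "n \<ge> N" "n > 0" by auto
    then have "root n (cmod (a n)) ^ n < (1 / r) ^ n"
      using N by (intro power_strict_mono) auto
    then have "cmod (a n) * r ^ n < 1"
      using \<open>n > 0\<close> assms(2) by (simp add: real_root_pow_pos2 field_simps)
    with that assms(2) show False by (simp add: mem_Nset_iff)
  qed
  then show ?thesis by (meson finite_lessThan finite_subset lessThan_iff subsetI)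
qed

lemma Nset_mono:
  assumes "0 \<le> r" "r \<le> r'"
  shows "Nset a r \<subseteq> Nset a r'"
proof
  fix n assume "n \<in> Nset a r"
  moreover have "cmod (a n) * r ^ n \<le> cmod (a n) * r' ^ n"
    using assms by (intro mult_left_mono power_mono) auto
  ultimately show "n \<in> Nset a r'"
    using assms by (simp add: mem_Nset_iff)
qed

lemma sfun_mono:
  assumes "0 < r" "r \<le> r'" "finite (Nset a r')"
  shows "sfun a r \<le> sfun a r'"
proof -
  have "(\<Sum>n\<in>Nset a r. ln (cmod (a n) * r ^ n)) \<le> (\<Sum>n\<in>Nset a r. ln (cmod (a n) * r' ^ n))"
  proof (rule sum_mono)
    fix n assume "n \<in> Nset a r"
    then have "0 < cmod (a n) * r ^ n" using assms by (simp add: mem_Nset_iff)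
    moreover have "cmod (a n) * r ^ n \<le> cmod (a n) * r' ^ n"
      using assms by (intro mult_left_mono power_mono) auto
    ultimately show "ln (cmod (a n) * r ^ n) \<le> ln (cmod (a n) * r' ^ n)" by simp
  qed
  also have "\<dots> \<le> (\<Sum>n\<in>Nset a r'. ln (cmod (a n) * r' ^ n))"
    using assms Nset_mono[of r r' a] by (intro sum_mono2) (auto simp: Nset_def)
  finally show ?thesis by (simp add: sfun_def)
qed

lemma card_mul_pred_le_twice_sum:
  fixes A :: "nat set"
  assumes "finite A"
  shows "real (card A) * (real (card A) - 1) \<le> 2 * (\<Sum>n\<in>A. real n)"
proof -
  obtain m where "A \<subseteq> {..<m}"
    using assms finite_nat_iff_bounded by blast
  then show ?thesis
  proof (induction m arbitrary: A)
    case (Suc m)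
    show ?case
    proof (cases "m \<in> A")
      case False
      with Suc.prems have "A \<subseteq> {..<m}" by (auto simp: less_Suc_eq)
      then show ?thesis by (rule Suc.IH)
    next
      case True
      let ?B = "A - {m}"
      have B: "?B \<subseteq> {..<m}" using Suc.prems by (auto simp: less_Suc_eq)
      have "finite A" using Suc.prems finite_subset by blast
      have card: "card A = Suc (card ?B)"
        using card.remove[OF \<open>finite A\<close> True] .
      have sum: "(\<Sum>n\<in>A. real n) = real m + (\<Sum>n\<in>?B. real n)"
        using sum.remove[OF \<open>finite A\<close> True] .
      have "card ?B \<le> m" using card_mono[OF _ B] by simp
      moreover have "real (card A) * (real (card A) - 1) = real (card ?B) * (real (card ?B) - 1) + 2 * real (card ?B)"
        by (simp add: card algebra_simps)
      ultimately show ?thesis using Suc.IH[OF B] sum by linarith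
    qed
  qed simp
qed

lemma sfun_shift:
  assumes "0 < r" "0 \<le> h" "finite (Nset a (r * exp h))"
  shows "sfun a r + h * (real (Ncount a r) * (real (Ncount a r) - 1)) \<le> sfun a (r * exp h)"
proof -
  have sub: "Nset a r \<subseteq> Nset a (r * exp h)" using assms by (intro Nset_mono) auto
  have shifted: "ln (cmod (a n) * (r * exp h) ^ n) = ln (cmod (a n) * r ^ n) + real n * h"
    if "n \<in> Nset a r" for n
  proof -
    have "0 < cmod (a n) * r ^ n" using that assms by (simp add: mem_Nset_iff)
    have "cmod (a n) * (r * exp h) ^ n = cmod (a n) * r ^ n * exp (real n * h)"
      by (simp add: power_mult_distrib exp_of_nat_mult)
    then have "ln (cmod (a n) * (r * exp h) ^ n) = ln (cmod (a n) * r ^ n) + ln (exp (real n * h))"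
      using \<open>0 < cmod (a n) * r ^ n\<close> by (simp only: ln_mult_pos exp_gt_zero)
    then show ?thesis by simp
  qed
  have "h * (real (Ncount a r) * (real (Ncount a r) - 1)) \<le> h * (2 * (\<Sum>n\<in>Nset a r. real n))"
    using assms sub finite_subset unfolding Ncount_def
    by (intro mult_left_mono card_mul_pred_le_twice_sum) auto
  then have "sfun a r + h * (real (Ncount a r) * (real (Ncount a r) - 1))
      \<le> 2 * (\<Sum>n\<in>Nset a r. ln (cmod (a n) * r ^ n) + real n * h)"
    by (simp add: sfun_def sum.distrib sum_distrib_left sum_distrib_right algebra_simps)
  also have "\<dots> = 2 * (\<Sum>n\<in>Nset a r. ln (cmod (a n) * (r * exp h) ^ n))"
    using shifted by simp
  also have "\<dots> \<le> sfun a (r * exp h)"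
    using assms sub by (auto simp: sfun_def Nset_def intro!: sum_mono2)
  finally show ?thesis .
qed

lemma sfun_at_top:
  assumes "infinite {n. a n \<noteq> 0}" "\<And>r. 0 < r \<Longrightarrow> finite (Nset a r)"
  shows "filterlim (sfun a) at_top at_top"
proof -
  obtain n where n: "a n \<noteq> 0" "n > 0"
    using assms(1) by (metis (mono_tags) finite_nat_set_iff_bounded_le mem_Collect_eq not_gr0 order_refl)
  define c where "c = cmod (a n)"
  have "c > 0" using n by (simp add: c_def)
  show ?thesis
  proof (subst filterlim_at_top_gt[where c = 0], intro allI impI)
    fix L :: real assume "L > 0"
    have "L \<le> sfun a x" if x: "x \<ge> max 1 (exp (L / 2) / c)" for x
    proof -
      have "x \<le> x ^ n" using x n(2) by (metis One_nat_def Suc_leI max.boundedE power_increasing power_one_right)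
      then have "c * x \<le> c * x ^ n" using \<open>c > 0\<close> by simp
      moreover have "exp (L / 2) \<le> c * x" using x \<open>c > 0\<close> by (simp add: field_simps)
      ultimately have "exp (L / 2) \<le> c * x ^ n" by linarith
      then have "L / 2 \<le> ln (c * x ^ n)" by (metis exp_gt_zero ln_exp ln_le_cancel_iff order_less_le_trans)
      moreover from this have "n \<in> Nset a x" using \<open>L > 0\<close> by (simp add: Nset_def c_def)
      ultimately have "L \<le> 2 * ln (cmod (a n) * x ^ n)" by (simp add: c_def)
      also have "\<dots> \<le> sfun a x"
        using member_le_sum[OF \<open>n \<in> Nset a x\<close>, of "\<lambda>m. ln (cmod (a m) * x ^ m)"] assms(2)[of x] x
        by (auto simp: sfun_def Nset_def)
      finally show ?thesis .
    qed
    then show "eventually (\<lambda>x. L \<le> sfun a x) at_top"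
      unfolding eventually_at_top_linorder by blast
  qed
qed

lemma summable_exp_neg_sqrt:
  fixes c :: real
  assumes "0 < c"
  shows "summable (\<lambda>k::nat. exp (- c * sqrt (real k)))"
proof (rule summable_comparison_test')
  show "summable (\<lambda>k::nat. 256 / c ^ 4 * inverse (real k ^ 2))"
    by (intro summable_mult inverse_power_summable) auto
  fix k :: nat assume "k \<ge> 1"
  define t where "t = c * sqrt (real k) / 4"
  have "0 \<le> t" using assms by (simp add: t_def)
  moreover have "t \<le> exp t" using exp_ge_add_one_self[of t] by linarith
  ultimately have "t ^ 4 \<le> exp t ^ 4" by (intro power_mono)
  also have "\<dots> = exp (c * sqrt (real k))"
    by (simp add: t_def flip: exp_of_nat_mult)
  finally have "t ^ 4 \<le> exp (c * sqrt (real k))" .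
  moreover have "sqrt (real k) ^ 4 = real k ^ 2"
    using power_mult[of "sqrt (real k)" 2 2] by simp
  ultimately have "c ^ 4 * real k ^ 2 / 256 \<le> exp (c * sqrt (real k))"
    by (simp add: t_def power_divide power_mult_distrib)
  then have "inverse (exp (c * sqrt (real k))) \<le> inverse (c ^ 4 * real k ^ 2 / 256)"
    using assms \<open>k \<ge> 1\<close> by (intro le_imp_inverse_le) auto
  then show "norm (exp (- c * sqrt (real k))) \<le> 256 / c ^ 4 * inverse (real k ^ 2)"
    by (simp add: exp_minus field_simps)
qed

lemma Ncount_mul_pred_lt:
  fixes a :: "nat \<Rightarrow> complex" and r c :: real and k :: nat
  defines "h \<equiv> exp (- c * sqrt (real k))"
  assumes r: "0 < r" and c: "0 \<le> c" and S: "0 < sfun a r" and k: "real k \<le> ln (sfun a r)"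
    and fin: "finite (Nset a (r * exp h))" and level: "sfun a (r * exp h) < exp (real k + 2)"
  shows "real (Ncount a r) * (real (Ncount a r) - 1)
    < exp 2 * sfun a r * exp (c * sqrt (ln (sfun a r)))"
proof -
  let ?S = "sfun a r"
  have "?S + h * (real (Ncount a r) * (real (Ncount a r) - 1)) < exp (real k + 2)"
    using sfun_shift[OF r _ fin] level by (simp add: h_def)
  then have "real (Ncount a r) * (real (Ncount a r) - 1) < exp (real k + 2) / h"
    using S by (simp add: h_def field_simps)
  also have "\<dots> = exp 2 * exp (real k) * exp (c * sqrt (real k))"
    by (simp add: h_def exp_minus field_simps flip: exp_add)
  also have "\<dots> \<le> exp 2 * ?S * exp (c * sqrt (ln ?S))"
  proof -
    have "exp (real k) \<le> ?S" using k S by (simp add: ln_ge_iff)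
    moreover have "exp (c * sqrt (real k)) \<le> exp (c * sqrt (ln ?S))"
      using k c by (simp add: mult_left_mono)
    ultimately show ?thesis using S by (intro mult_mono) auto
  qed
  finally show ?thesis .
qed

lemma lt_of_mul_pred_lt:
  fixes N S \<epsilon> :: real
  assumes "0 < \<epsilon>" "0 < S" "1 \<le> ln S" "9 / \<epsilon>\<^sup>2 \<le> ln S"
    and N: "N * (N - 1) < exp 2 * S * exp ((2 + \<epsilon>) * sqrt (ln S))"
  shows "N < sqrt S * exp ((1 + \<epsilon>) * sqrt (ln S))"
proof (rule ccontr)
  define u where "u = sqrt (ln S)"
  define X where "X = sqrt S * exp ((1 + \<epsilon>) * u)"
  assume "\<not> N < sqrt S * exp ((1 + \<epsilon>) * sqrt (ln S))"
  then have "X \<le> N" by (simp add: X_def u_def)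
  have "1 \<le> u" using assms by (simp add: u_def)
  have "9 \<le> \<epsilon>\<^sup>2 * ln S" using assms by (simp add: field_simps)
  then have "3 \<le> sqrt (\<epsilon>\<^sup>2 * ln S)" by (intro real_le_rsqrt) simp
  also have "\<dots> = \<epsilon> * u" using assms by (simp add: u_def real_sqrt_mult)
  finally have "3 \<le> \<epsilon> * u" by simp
  have e2: "2 \<le> exp (1 :: real)" using exp_ge_add_one_self[of 1] by simp
  have "exp 1 \<le> S" using assms by (simp add: ln_ge_iff)
  then have "1 \<le> sqrt S" using e2 by simp
  moreover have "1 \<le> (1 + \<epsilon>) * u" using \<open>1 \<le> u\<close> \<open>3 \<le> \<epsilon> * u\<close> by (simp add: distrib_right)
  then have "2 \<le> exp ((1 + \<epsilon>) * u)" using e2 by (meson exp_le_cancel_iff order_trans)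
  ultimately have "1 * 2 \<le> sqrt S * exp ((1 + \<epsilon>) * u)"
    by (intro mult_mono) auto
  then have "2 \<le> X" by (simp add: X_def)
  define P where "P = S * exp ((2 + \<epsilon>) * u)"
  have "0 < P" using assms by (simp add: P_def)
  have "X\<^sup>2 = S * exp (2 * ((1 + \<epsilon>) * u))"
    using assms by (simp add: X_def power_mult_distrib exp_double)
  also have "2 * ((1 + \<epsilon>) * u) = (2 + \<epsilon>) * u + \<epsilon> * u" by (simp add: algebra_simps)
  finally have X2: "X\<^sup>2 = P * exp (\<epsilon> * u)" by (simp add: P_def exp_add)
  have "X * (X - 1) \<le> N * (N - 1)" using \<open>X \<le> N\<close> \<open>2 \<le> X\<close> by (intro mult_mono) auto
  moreover have "0 \<le> X * (X - 2)" using \<open>2 \<le> X\<close> by simp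
  moreover have "X * (X - 2) = 2 * (X * (X - 1)) - X\<^sup>2" by (simp add: power2_eq_square algebra_simps)
  moreover have "N * (N - 1) < exp 2 * P" using N by (simp add: P_def u_def)
  ultimately have "P * exp (\<epsilon> * u) < 2 * (exp 2 * P)" unfolding X2 by linarith
  then have "exp (\<epsilon> * u) < 2 * exp 2"
    using \<open>0 < P\<close> by (metis mult.commute mult.left_commute mult_less_cancel_left_pos)
  moreover have "exp 1 * exp 2 \<le> exp (\<epsilon> * u)"
    using \<open>3 \<le> \<epsilon> * u\<close> by (simp flip: exp_add)
  moreover have "2 * exp 2 \<le> exp 1 * exp (2 :: real)" using e2 by simp
  ultimately show False by linarith
qed

lemma Ncount_lt_at_regular_radius:
  fixes a :: "nat \<Rightarrow> complex" and r \<epsilon> :: real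
  defines "h \<equiv> \<lambda>k::nat. exp (- (2 + \<epsilon>) * sqrt (real k))"
  assumes "0 < \<epsilon>" "0 < r" "finite (Nset a (r * exp (h (nat \<lfloor>ln (sfun a r)\<rfloor>))))"
    and large: "exp (max 1 (9 / \<epsilon>\<^sup>2)) \<le> sfun a r"
    and level: "\<forall>k. sfun a r < exp (real k + 2) \<longrightarrow> sfun a (r * exp (h k)) < exp (real k + 2)"
  shows "real (Ncount a r) < sqrt (sfun a r) * exp ((1 + \<epsilon>) * sqrt (ln (sfun a r)))"
proof -
  define k where "k = nat \<lfloor>ln (sfun a r)\<rfloor>"
  have "0 < sfun a r" using large by (meson exp_gt_zero order_less_le_trans)
  with large have L: "max 1 (9 / \<epsilon>\<^sup>2) \<le> ln (sfun a r)" using ln_ge_iff by blast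
  then have "ln (sfun a r) < real k + 2" by (simp add: k_def) linarith
  then have "sfun a r < exp (real k + 2)" using \<open>0 < sfun a r\<close> by (metis exp_less_cancel_iff exp_ln)
  then have "sfun a (r * exp (h k)) < exp (real k + 2)" using level by blast
  moreover have "real k \<le> ln (sfun a r)" using L by (simp add: k_def)
  ultimately have "real (Ncount a r) * (real (Ncount a r) - 1)
      < exp 2 * sfun a r * exp ((2 + \<epsilon>) * sqrt (ln (sfun a r)))"
    using assms(2-4) \<open>0 < sfun a r\<close> unfolding h_def k_def by (intro Ncount_mul_pred_lt) auto
  with L \<open>0 < sfun a r\<close> show ?thesis using assms(2) by (intro lt_of_mul_pred_lt) auto
qed

theorem lemma3p3:
  fixes a :: "nat \<Rightarrow> complex" and \<epsilon> :: real
  assumes "infinite {n. a n \<noteq> 0}"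
    and "limsup (\<lambda>n. ereal (root n (cmod (a n)))) = 0"
    and "\<epsilon> > 0"
  shows "\<exists>E. E \<subseteq> {1<..} \<and> finite_log_measure E \<and>
    (\<forall>r \<in> {1<..} - E. real (Ncount a r) <
        sqrt (sfun a r) * exp ((1 + \<epsilon>) * sqrt (ln (sfun a r))))"
proof -
  have fin: "\<And>r. 0 < r \<Longrightarrow> finite (Nset a r)" using finite_Nset[OF assms(2)] .
  have mono: "\<And>x y. 1 < x \<Longrightarrow> x \<le> y \<Longrightarrow> sfun a x \<le> sfun a y"
    using fin by (intro sfun_mono) auto
  have lim: "filterlim (sfun a) at_top at_top" using sfun_at_top[OF assms(1) fin] .
  define h :: "nat \<Rightarrow> real" where "h = (\<lambda>k. exp (- (2 + \<epsilon>) * sqrt (real k)))"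
  have h: "summable h" "\<And>k. 0 \<le> h k"
    using summable_exp_neg_sqrt[of "2 + \<epsilon>"] assms(3) by (simp_all add: h_def)
  obtain E\<^sub>1 where E\<^sub>1: "E\<^sub>1 \<subseteq> {1<..}" "finite_log_measure E\<^sub>1"
    and level: "\<forall>r \<in> {1<..} - E\<^sub>1. \<forall>k. sfun a r < exp (real k + 2) \<longrightarrow>
      sfun a (r * exp (h k)) < exp (real k + 2)"
    using level_crossing_exceptional_set[OF _ lim h, of "\<lambda>k. exp (real k + 2)"] mono by blast
  obtain R where R: "\<And>r. R \<le> r \<Longrightarrow> exp (max 1 (9 / \<epsilon>\<^sup>2)) \<le> sfun a r"
    using lim by (auto simp: filterlim_at_top eventually_at_top_linorder)
  define r\<^sub>0 where "r\<^sub>0 = max 1 R"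
  have "finite_log_measure (E\<^sub>1 \<union> {1<..r\<^sub>0})"
    by (intro finite_log_measure_Un[OF E\<^sub>1(2)] finite_log_measure_bounded[of _ 1 r\<^sub>0]) auto
  moreover have "real (Ncount a r) < sqrt (sfun a r) * exp ((1 + \<epsilon>) * sqrt (ln (sfun a r)))"
    if "r \<in> {1<..} - (E\<^sub>1 \<union> {1<..r\<^sub>0})" for r
    using that level R[of r] fin assms(3) unfolding h_def r\<^sub>0_def
    by (intro Ncount_lt_at_regular_radius) auto
  ultimately show ?thesis using E\<^sub>1 by (intro exI[of _ "E\<^sub>1 \<union> {1<..r\<^sub>0}"]) auto
qed

end
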